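(* Let $q=2^m$ and let $f\in\mathbb{F}_q[x]$ define a function $f:\mathbb{F}_q\to\mathbb{F}_q$. Let $X$ be the algebraic set of points $(x,y,z,t)$ in the affine space $\mathbb{A}^4(\overline{\mathbb{F}}_q)$ such that $P_f(x,y,z)=P_f(x,y,t)=0$, and let $V\subset\mathbb{A}^4(\overline{\mathbb{F}}_q)$ be the hypersurface defined by $$(x+y)(x+z)(x+t)(y+z)(y+t)(z+t)(x+y+z+t)=0.$$ Then $\delta(f)\le 4$ if and only if $X(\mathbb{F}_q)\subset V$, where $X(\mathbb{F}_q)$ denotes the set of $\mathbb{F}_q$-rational points of $X$.
   Context: The differential uniformity of $f:\mathbb{F}_q\to\mathbb{F}_q$ is $\delta(f)=\max_{\alpha\neq0,\beta\in\mathbb{F}_q}\#\{x\in\mathbb{F}_q : f(x+\alpha)+f(x)=\beta\}$. For a polynomial $f$, the polynomial $f(x)+f(y)+f(z)+f(x+y+z)$ is divisible by $(x+y)(x+z)(y+z)$, and $P_f(x,y,z)$ denotes the quotient polynomial $\frac{f(x)+f(y)+f(z)+f(x+y+z)}{(x+y)(x+z)(y+z)}$. *)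

theory Defs
  imports "HOL-Computational_Algebra.Polynomial"
begin

text \<open>Trivariate polynomials over a field are represented as nested univariate
polynomials: an element of 'a poly poly poly is a polynomial in Z whose
coefficients are polynomials in Y whose coefficients are polynomials in X.\<close>

definition const3 :: "'a::comm_ring_1 \<Rightarrow> 'a poly poly poly" where
  "const3 c = [:[:[:c:]:]:]"

definition varX :: "'a::comm_ring_1 poly poly poly" where
  "varX = [:[:[:0, 1:]:]:]"

definition varY :: "'a::comm_ring_1 poly poly poly" where
  "varY = [:[:[:0:], [:1:]:]:]"

definition varZ :: "'a::comm_ring_1 poly poly poly" where
  "varZ = [:0, 1:]"

definition eval3 :: "'a::comm_ring_1 poly poly poly \<Rightarrow> 'a \<Rightarrow> 'a \<Rightarrow> 'a \<Rightarrow> 'a" where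
  "eval3 P x y z = poly (poly (poly P [:[:z:]:]) [:y:]) x"

definition subst3 :: "'a::comm_ring_1 poly \<Rightarrow> 'a poly poly poly \<Rightarrow> 'a poly poly poly" where
  "subst3 f T = poly (map_poly const3 f) T"

definition Pf :: "'a::field poly \<Rightarrow> 'a poly poly poly" where
  "Pf f = (subst3 f varX + subst3 f varY + subst3 f varZ + subst3 f (varX + varY + varZ))
           div ((varX + varY) * (varX + varZ) * (varY + varZ))"

definition diff_uniformity :: "('a::{field,finite} \<Rightarrow> 'a) \<Rightarrow> nat" where
  "diff_uniformity F = Max {card {x. F (x + \<alpha>) + F x = \<beta>} | \<alpha> \<beta>. \<alpha> \<noteq> 0}"

end

theory Submission
  imports Defs "HOL-Number_Theory.Residues"
begin

text \<open>Over a field of characteristic 2 the four numbers x, y, z, x + y + z sum to zero, so they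
  are the roots of a quartic without cubic term and their power sums obey a linear recurrence of
  order four. The first four power sums are 0, 0, 0 and (x+y)(x+z)(y+z), hence
  f(x) + f(y) + f(z) + f(x+y+z) = (x+y)(x+z)(y+z) P_f(x,y,z).

  The solutions of f(u + a) + f(u) = b form a union of cosets u + {0, a}. For x \<noteq> y and
  z \<notin> {x, y}, the point z solves the equation with a = x + y, b = f(x) + f(y) exactly when
  P_f(x,y,z) = 0. So a point of X(F_q) off V is the same as three distinct cosets {x, y},
  {z, x+y+z}, {t, x+y+t} of solutions of one equation, i.e. a solution set of size at least 6;
  and since solution sets have even size, this is the same as one of size more than 4.\<close>

lemma two_eq_zero_if_card_eq_power_two:
  assumes "card (UNIV :: 'a::{field,finite} set) = 2 ^ m"
  shows "(2::'a) = 0"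
proof -
  have prime: "prime CHAR('a)"
    by (rule prime_CHAR_semidom) (simp add: finite_imp_CHAR_pos)
  have "CHAR('a) dvd 2 ^ m"
    using CHAR_dvd_CARD[where 'a='a] assms by simp
  then have "CHAR('a) dvd 2"
    using prime prime_dvd_power by blast
  then have "CHAR('a) = 2"
    using prime two_is_prime_nat unfolding prime_nat_iff by (metis less_numeral_extra(4))
  then show ?thesis
    by (metis of_nat_CHAR of_nat_numeral)
qed

lemma char2_add_self:
  fixes x :: "'a::ring_1"
  assumes "(2::'a) = 0"
  shows "x + x = 0"
  by (metis assms mult_2 mult_zero_left)

lemma char2_add_eq_0_iff:
  fixes x y :: "'a::ring_1"
  assumes "(2::'a) = 0"
  shows "x + y = 0 \<longleftrightarrow> x = y"
  by (metis add_eq_0_iff2 assms char2_add_self)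

lemma char2_add_cancel_left:
  fixes x y :: "'a::ring_1"
  assumes "(2::'a) = 0"
  shows "x + (x + y) = y"
  by (simp add: assms char2_add_self flip: add.assoc)

lemma two_eq_0_poly:
  assumes "(2::'a::comm_ring_1) = 0"
  shows "(2::'a poly) = 0"
  by (simp add: assms numeral_poly)

lemma power_eq_by_quartic_root:
  fixes v x y z w :: "'a::comm_ring_1"
  assumes "x + y + z + w = 0" and "v \<in> {x, y, z, w}"
  shows "v ^ (k + 4) = (x*y*z + x*y*w + x*z*w + y*z*w) * v ^ (k + 1)
     - (x*y + x*z + x*w + y*z + y*w + z*w) * v ^ (k + 2) - x*y*z*w * v ^ k"
proof -
  have "(v - x) * (v - y) * (v - z) * (v - w) = 0"
    using assms(2) by auto
  moreover have "(v - x) * (v - y) * (v - z) * (v - w) = v ^ 4 - (x + y + z + w) * v ^ 3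
     + (x*y + x*z + x*w + y*z + y*w + z*w) * v ^ 2 - (x*y*z + x*y*w + x*z*w + y*z*w) * v + x*y*z*w"
    by (simp add: algebra_simps power_numeral_reduce)
  ultimately have "0 = v ^ 4 + (x*y + x*z + x*w + y*z + y*w + z*w) * v ^ 2
     - (x*y*z + x*y*w + x*z*w + y*z*w) * v + x*y*z*w"
    using assms(1) by simp
  then have "v ^ 4 = (x*y*z + x*y*w + x*z*w + y*z*w) * v
     - (x*y + x*z + x*w + y*z + y*w + z*w) * v ^ 2 - x*y*z*w"
    by (simp add: algebra_simps)
  then have "v ^ (k + 4) = ((x*y*z + x*y*w + x*z*w + y*z*w) * v
     - (x*y + x*z + x*w + y*z + y*w + z*w) * v ^ 2 - x*y*z*w) * v ^ k"
    by (simp only: power_add mult.commute)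
  also have "\<dots> = (x*y*z + x*y*w + x*z*w + y*z*w) * v ^ (k + 1)
     - (x*y + x*z + x*w + y*z + y*w + z*w) * v ^ (k + 2) - x*y*z*w * v ^ k"
    by (simp add: algebra_simps power_add power2_eq_square)
  finally show ?thesis .
qed

lemma power_sum_four_recurrence:
  fixes x y z w :: "'a::comm_ring_1"
  assumes sum_zero: "x + y + z + w = 0"
  defines "p k \<equiv> x ^ k + y ^ k + z ^ k + w ^ k"
  shows "p (k + 4) = (x*y*z + x*y*w + x*z*w + y*z*w) * p (k + 1)
     - (x*y + x*z + x*w + y*z + y*w + z*w) * p (k + 2) - x*y*z*w * p k"
  unfolding p_def
  by (simp only: power_eq_by_quartic_root[OF sum_zero] insert_iff simp_thms) (simp add: algebra_simps)

lemma char2_power_sum_dvd: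
  fixes x y z :: "'a::comm_ring_1"
  assumes two: "(2::'a) = 0"
  shows "(x + y) * (x + z) * (y + z) dvd x ^ k + y ^ k + z ^ k + (x + y + z) ^ k"
proof -
  define w where "w = x + y + z"
  define D where "D = (x + y) * (x + z) * (y + z)"
  define p where "p k = x ^ k + y ^ k + z ^ k + w ^ k" for k
  have sum_zero: "x + y + z + w = 0"
    unfolding w_def by (rule char2_add_self[OF two])
  have "p 0 = 2 * 2" "p 1 = 2 * w"
    "p 2 = 2 * (x^2 + y^2 + z^2 + x*y + x*z + y*z)"
    "p 3 = D + 2 * (x^3 + y^3 + z^3 + x^2*y + x^2*z + y^2*x + y^2*z + z^2*x + z^2*y + 2*x*y*z)"
    unfolding p_def D_def w_def by (simp_all add: algebra_simps power2_eq_square power3_eq_cube)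
  then have initial: "D dvd p 0" "D dvd p 1" "D dvd p 2" "D dvd p 3"
    using two by simp_all
  have "D dvd p k \<and> D dvd p (k + 1) \<and> D dvd p (k + 2) \<and> D dvd p (k + 3)"
  proof (induction k)
    case 0
    show ?case using initial by (simp add: numeral_2_eq_2 numeral_3_eq_3)
  next
    case (Suc k)
    then have "D dvd p (k + 4)"
      unfolding p_def power_sum_four_recurrence[OF sum_zero] by (intro dvd_diff dvd_mult) auto
    with Suc show ?case by (simp add: eval_nat_numeral)
  qed
  then show ?thesis
    unfolding D_def p_def w_def by blast
qed

lemma eval3_add [simp]: "eval3 (P + Q) x y z = eval3 P x y z + eval3 Q x y z"
  by (simp add: eval3_def)

lemma eval3_mult [simp]: "eval3 (P * Q) x y z = eval3 P x y z * eval3 Q x y z"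
  by (simp add: eval3_def)

lemma eval3_power [simp]: "eval3 (P ^ n) x y z = eval3 P x y z ^ n"
  by (simp add: eval3_def)

lemma eval3_sum [simp]: "eval3 (\<Sum>i\<in>A. P i) x y z = (\<Sum>i\<in>A. eval3 (P i) x y z)"
  by (simp add: eval3_def poly_sum)

lemma eval3_const3 [simp]: "eval3 (const3 c) x y z = c"
  by (simp add: eval3_def const3_def)

lemma eval3_varX [simp]: "eval3 varX x y z = x"
  by (simp add: eval3_def varX_def)

lemma eval3_varY [simp]: "eval3 varY x y z = y"
  by (simp add: eval3_def varY_def)

lemma eval3_varZ [simp]: "eval3 varZ x y z = z"
  by (simp add: eval3_def varZ_def)

lemma subst3_eq_sum: "subst3 f T = (\<Sum>i\<le>degree f. const3 (Polynomial.coeff f i) * T ^ i)"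
proof -
  have "degree (map_poly const3 f) = degree f"
    by (rule degree_map_poly) (simp add: const3_def)
  then show ?thesis
    unfolding subst3_def by (simp add: poly_altdef coeff_map_poly const3_def)
qed

lemma eval3_subst3 [simp]: "eval3 (subst3 f T) x y z = poly f (eval3 T x y z)"
  by (simp add: subst3_eq_sum poly_altdef)

lemma char2_mult_Pf:
  fixes f :: "'a::field poly"
  assumes "(2::'a) = 0"
  shows "(varX + varY) * (varX + varZ) * (varY + varZ) * Pf f =
    subst3 f varX + subst3 f varY + subst3 f varZ + subst3 f (varX + varY + varZ)"
proof -
  have two: "(2::'a poly poly poly) = 0"
    using assms by (intro two_eq_0_poly)
  have "subst3 f varX + subst3 f varY + subst3 f varZ + subst3 f (varX + varY + varZ)
     = (\<Sum>i\<le>degree f. const3 (Polynomial.coeff f i) * (varX^i + varY^i + varZ^i + (varX + varY + varZ)^i))"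
    by (simp add: subst3_eq_sum distrib_left sum.distrib)
  also have "(varX + varY) * (varX + varZ) * (varY + varZ) dvd \<dots>"
    by (intro dvd_sum dvd_mult char2_power_sum_dvd[OF two])
  finally show ?thesis
    unfolding Pf_def by (rule dvd_mult_div_cancel)
qed

lemma char2_poly_sum_eq_Pf:
  fixes f :: "'a::field poly"
  assumes "(2::'a) = 0"
  shows "poly f x + poly f y + poly f z + poly f (x + y + z) = (x + y) * (x + z) * (y + z) * eval3 (Pf f) x y z"
  using arg_cong[OF char2_mult_Pf[OF assms, of f], of "\<lambda>P. eval3 P x y z"] by simp

definition diff_solutions :: "('a::ring_1 \<Rightarrow> 'a) \<Rightarrow> 'a \<Rightarrow> 'a \<Rightarrow> 'a set" where
  "diff_solutions F \<alpha> \<beta> = {x. F (x + \<alpha>) + F x = \<beta>}"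

lemma diff_uniformity_le_iff:
  fixes F :: "'a::{field,finite} \<Rightarrow> 'a"
  shows "diff_uniformity F \<le> n \<longleftrightarrow> (\<forall>\<alpha> \<beta>. \<alpha> \<noteq> 0 \<longrightarrow> card (diff_solutions F \<alpha> \<beta>) \<le> n)"
proof -
  let ?C = "{card (diff_solutions F \<alpha> \<beta>) | \<alpha> \<beta>. \<alpha> \<noteq> 0}"
  have "?C \<subseteq> (\<lambda>(\<alpha>, \<beta>). card (diff_solutions F \<alpha> \<beta>)) ` UNIV"
    by auto
  then have "finite ?C"
    by (rule finite_subset) simp
  moreover have "card (diff_solutions F 1 0) \<in> ?C"
    by auto
  then have "?C \<noteq> {}"
    by blast
  ultimately show ?thesis
    unfolding diff_uniformity_def diff_solutions_def[symmetric] by (auto simp: Max_le_iff)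
qed

lemma char2_add_mem_diff_solutions:
  fixes F :: "'a::ring_1 \<Rightarrow> 'a"
  assumes "(2::'a) = 0" and "u \<in> diff_solutions F \<alpha> \<beta>"
  shows "u + \<alpha> \<in> diff_solutions F \<alpha> \<beta>"
proof -
  have "u + \<alpha> + \<alpha> = u"
    by (simp add: add.assoc char2_add_self[OF assms(1)])
  with assms(2) show ?thesis
    unfolding diff_solutions_def mem_Collect_eq by (simp only: add.commute)
qed

lemma char2_mem_diff_solutions_iff:
  fixes F :: "'a::ring_1 \<Rightarrow> 'a"
  assumes "(2::'a) = 0"
  shows "z \<in> diff_solutions F (x + y) (F x + F y) \<longleftrightarrow> F x + F y + F z + F (x + y + z) = 0"
  using char2_add_eq_0_iff[OF assms, of "F (z + (x + y)) + F z" "F x + F y"]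
  by (simp add: diff_solutions_def ac_simps)

lemma char2_card_gt_4_iff_three_pairs:
  fixes S :: "'a::{ring_1,finite} set"
  assumes two: "(2::'a) = 0" and "\<alpha> \<noteq> 0" and closed: "\<And>u. u \<in> S \<Longrightarrow> u + \<alpha> \<in> S"
  shows "4 < card S \<longleftrightarrow>
    (\<exists>x\<in>S. \<exists>z\<in>S. \<exists>t\<in>S. z \<notin> {x, x + \<alpha>} \<and> t \<notin> {x, x + \<alpha>, z, z + \<alpha>})"
proof
  assume card: "4 < card S"
  have outside: "\<exists>u\<in>S. u \<notin> set xs" if "length xs \<le> 4" for xs
  proof (rule ccontr)
    assume "\<not> (\<exists>u\<in>S. u \<notin> set xs)"
    then have "card S \<le> card (set xs)"
      by (intro card_mono) auto
    with card that card_length[of xs] show False by simp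
  qed
  obtain x where "x \<in> S"
    using outside[of "[]"] by auto
  moreover obtain z where "z \<in> S" "z \<notin> {x, x + \<alpha>}"
    using outside[of "[x, x + \<alpha>]"] by auto
  moreover obtain t where "t \<in> S" "t \<notin> {x, x + \<alpha>, z, z + \<alpha>}"
    using outside[of "[x, x + \<alpha>, z, z + \<alpha>]"] by auto
  ultimately show "\<exists>x\<in>S. \<exists>z\<in>S. \<exists>t\<in>S. z \<notin> {x, x + \<alpha>} \<and> t \<notin> {x, x + \<alpha>, z, z + \<alpha>}"
    by blast
next
  assume "\<exists>x\<in>S. \<exists>z\<in>S. \<exists>t\<in>S. z \<notin> {x, x + \<alpha>} \<and> t \<notin> {x, x + \<alpha>, z, z + \<alpha>}"
  then obtain x z t where in_S: "x \<in> S" "z \<in> S" "t \<in> S"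
    and new: "z \<notin> {x, x + \<alpha>}" "t \<notin> {x, x + \<alpha>, z, z + \<alpha>}"
    by blast
  have shift_back: "v = u + \<alpha>" if "u = v + \<alpha>" for u v
    using that by (simp add: add.assoc char2_add_self[OF two])
  have "x \<noteq> z + \<alpha>" "x \<noteq> t + \<alpha>" "z \<noteq> t + \<alpha>"
    using new shift_back by blast+
  then have "card {x, x + \<alpha>, z, z + \<alpha>, t, t + \<alpha>} = 6"
    using new \<open>\<alpha> \<noteq> 0\<close> by auto
  moreover have "card {x, x + \<alpha>, z, z + \<alpha>, t, t + \<alpha>} \<le> card S"
    using in_S closed by (intro card_mono) auto
  ultimately show "4 < card S"
    by simp
qed

lemma char2_diff_uniformity_le_4_iff:
  fixes F :: "'a::{field,finite} \<Rightarrow> 'a" and E :: "'a \<Rightarrow> 'a \<Rightarrow> 'a \<Rightarrow> 'a"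
  assumes two: "(2::'a) = 0"
    and factor: "\<And>x y z. F x + F y + F z + F (x + y + z) = (x + y) * (x + z) * (y + z) * E x y z"
  shows "diff_uniformity F \<le> 4 \<longleftrightarrow> (\<forall>x y z t. E x y z = 0 \<and> E x y t = 0 \<longrightarrow>
    (x + y) * (x + z) * (x + t) * (y + z) * (y + t) * (z + t) * (x + y + z + t) = 0)"
proof -
  note add_eq_0 = char2_add_eq_0_iff[OF two]
  have solution_iff: "z \<in> diff_solutions F (x + y) (F x + F y) \<longleftrightarrow> E x y z = 0"
    if "x \<noteq> y" "z \<noteq> x" "z \<noteq> y" for x y z
    unfolding char2_mem_diff_solutions_iff[OF two] factor using that by (simp add: add_eq_0)
  have off_V: "(x + y) * (x + z) * (x + t) * (y + z) * (y + t) * (z + t) * (x + y + z + t) \<noteq> 0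
      \<longleftrightarrow> x \<noteq> y \<and> z \<notin> {x, y} \<and> t \<notin> {x, y, z, x + y + z}" for x y z t :: 'a
    unfolding mult_eq_0_iff add_eq_0 by auto
  have "\<not> diff_uniformity F \<le> 4 \<longleftrightarrow> (\<exists>\<alpha> \<beta>. \<alpha> \<noteq> 0 \<and> 4 < card (diff_solutions F \<alpha> \<beta>))"
    by (auto simp: diff_uniformity_le_iff not_le)
  also have "\<dots> \<longleftrightarrow> (\<exists>\<alpha> \<beta>. \<alpha> \<noteq> 0 \<and> (\<exists>x\<in>diff_solutions F \<alpha> \<beta>. \<exists>z\<in>diff_solutions F \<alpha> \<beta>.
      \<exists>t\<in>diff_solutions F \<alpha> \<beta>. z \<notin> {x, x + \<alpha>} \<and> t \<notin> {x, x + \<alpha>, z, z + \<alpha>}))"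
    by (simp add: char2_card_gt_4_iff_three_pairs[OF two _ char2_add_mem_diff_solutions[OF two]]
        cong: conj_cong)
  also have "\<dots> \<longleftrightarrow> (\<exists>x y z t. E x y z = 0 \<and> E x y t = 0 \<and>
      (x + y) * (x + z) * (x + t) * (y + z) * (y + t) * (z + t) * (x + y + z + t) \<noteq> 0)"
    (is "?pairs \<longleftrightarrow> ?off_V")
  proof
    assume ?pairs
    then obtain \<alpha> \<beta> x z t where "\<alpha> \<noteq> 0"
      and sol: "x \<in> diff_solutions F \<alpha> \<beta>" "z \<in> diff_solutions F \<alpha> \<beta>" "t \<in> diff_solutions F \<alpha> \<beta>"
      and new: "z \<notin> {x, x + \<alpha>}" "t \<notin> {x, x + \<alpha>, z, z + \<alpha>}"
      by blast
    define y where "y = x + \<alpha>"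
    have \<alpha>: "\<alpha> = x + y"
      unfolding y_def by (simp add: char2_add_cancel_left[OF two])
    have \<beta>: "\<beta> = F x + F y"
      using sol(1) by (simp add: diff_solutions_def y_def add.commute)
    have "z + \<alpha> = x + y + z"
      unfolding \<alpha> by (simp add: ac_simps)
    then have conds: "x \<noteq> y" "z \<notin> {x, y}" "t \<notin> {x, y, z, x + y + z}"
      using new \<open>\<alpha> \<noteq> 0\<close> by (auto simp: y_def)
    moreover have "E x y z = 0" "E x y t = 0"
      using sol conds solution_iff unfolding \<alpha> \<beta> by auto
    ultimately show ?off_V
      using off_V by blast
  next
    assume ?off_V
    then obtain x y z t where E: "E x y z = 0" "E x y t = 0"
      and conds: "x \<noteq> y" "z \<notin> {x, y}" "t \<notin> {x, y, z, x + y + z}"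
      using off_V by blast
    have y: "x + (x + y) = y"
      by (rule char2_add_cancel_left[OF two])
    have "x \<in> diff_solutions F (x + y) (F x + F y)"
      by (simp add: diff_solutions_def add.commute y)
    moreover have "z \<in> diff_solutions F (x + y) (F x + F y)" "t \<in> diff_solutions F (x + y) (F x + F y)"
      using E conds solution_iff by auto
    moreover have "x + y \<noteq> 0" "z + (x + y) = x + y + z"
      using conds by (simp_all add: add_eq_0 ac_simps)
    ultimately show ?pairs
      using conds y by (metis insert_iff)
  qed
  finally show ?thesis
    by blast
qed

theorem theorem2p2:
  fixes f :: "'a::{field,finite} poly" and m :: nat
  assumes "card (UNIV :: 'a set) = 2 ^ m"
  shows "diff_uniformity (poly f) \<le> 4 \<longleftrightarrow>
    (\<forall>x y z t :: 'a. eval3 (Pf f) x y z = 0 \<and> eval3 (Pf f) x y t = 0 \<longrightarrow>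
       (x + y) * (x + z) * (x + t) * (y + z) * (y + t) * (z + t) * (x + y + z + t) = 0)"
proof -
  have two: "(2::'a) = 0"
    using assms by (rule two_eq_zero_if_card_eq_power_two)
  show ?thesis
    by (rule char2_diff_uniformity_le_4_iff[OF two char2_poly_sum_eq_Pf[OF two]])
qed

end
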